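(* Let $M$ be a model with borders, let $f:M^s\to U(n)$ be the unique p-morphism with image $M_{\wedge,\to}$, let $h:\mathcal U(M_{\wedge,\to})\to\mathcal U(M^s)$ be $h(U)=f^{-1}(U)$, and let $r:\mathcal U(M^s)\to\mathcal U(M)$ be $r(V)=\{x\in M\mid\forall y\ge x\,(y\in M^s\Rightarrow y\in V)\}$. Let $B$ be the $(\wedge,\to)$-subalgebra of $\mathcal U(M)$ generated by $v(p_1),\dots,v(p_n)$. Then $B$ equals the image of $r\circ h$. In particular, $B$ is isomorphic, as an implicative meet-semilattice, to $\mathcal U(M_{\wedge,\to})$.
   Context: Fix $n\ge1$ and variables $p_1,\dots,p_n$; $2^n=\{0,1\}^n$ with componentwise order. A model is $(M,\le,c)$, $(M,\le)$ a poset, $c:M\to 2^n$ order-preserving, with intuitionistic Kripke semantics; $v(\varphi)$ is the set of points satisfying $\varphi$. $\mathcal U(X)$ is the Heyting algebra of up-sets of a poset $X$. A p-morphism of models is an order- and colour-preserving map $f$ such that $f(x)\le y$ implies $f(x')=y$ for some $x'\ge x$. A point $x$ is a $q$-border point if $x\not\models q$ and all $y>x$ satisfy $q$; separated if it is a $q$-border point for some variable $q$. $M^s$: separated points with restricted order and colouring (all chains have at most $n$ elements). $M$ has borders if for every variable $p$ and every $x$ with $x\not\models p$ there is a $p$-border point $y\ge x$. $U(n)$ is the $n$-universal model: the generated submodel of the canonical model of IPC on $p_1,\dots,p_n$ (prime filters of the free Heyting algebra ordered by inclusion, $c(x)_i=1$ iff $p_i\in x$) consisting of points with finite up-set. For every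 model of finite depth there is a unique p-morphism into $U(n)$. $M_{\wedge,\to}$ is the image of the unique p-morphism $M^s\to U(n)$, a generated submodel of $U(n)$. *)

theory Defs
  imports Main
begin

text \<open>A model over variables p_0..p_(n-1): carrier M, partial order le on M,
 colouring c (c x i means x satisfies p_i, only i < n is relevant).\<close>

definition is_model :: "nat \<Rightarrow> 'a set \<Rightarrow> ('a \<Rightarrow> 'a \<Rightarrow> bool) \<Rightarrow> ('a \<Rightarrow> nat \<Rightarrow> bool) \<Rightarrow> bool" where
  "is_model n M le c \<longleftrightarrow>
     (\<forall>x\<in>M. le x x) \<and>
     (\<forall>x\<in>M. \<forall>y\<in>M. le x y \<and> le y x \<longrightarrow> x = y) \<and>
     (\<forall>x\<in>M. \<forall>y\<in>M. \<forall>z\<in>M. le x y \<and> le y z \<longrightarrow> le x z) \<and>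
     (\<forall>x\<in>M. \<forall>y\<in>M. le x y \<longrightarrow> (\<forall>i<n. c x i \<longrightarrow> c y i))"

definition val :: "'a set \<Rightarrow> ('a \<Rightarrow> nat \<Rightarrow> bool) \<Rightarrow> nat \<Rightarrow> 'a set" where
  "val M c i = {x\<in>M. c x i}"

definition border_point :: "'a set \<Rightarrow> ('a \<Rightarrow> 'a \<Rightarrow> bool) \<Rightarrow> ('a \<Rightarrow> nat \<Rightarrow> bool) \<Rightarrow> nat \<Rightarrow> 'a \<Rightarrow> bool" where
  "border_point M le c i x \<longleftrightarrow> x \<in> M \<and> \<not> c x i \<and> (\<forall>y\<in>M. le x y \<and> y \<noteq> x \<longrightarrow> c y i)"

definition separated_pts :: "nat \<Rightarrow> 'a set \<Rightarrow> ('a \<Rightarrow> 'a \<Rightarrow> bool) \<Rightarrow> ('a \<Rightarrow> nat \<Rightarrow> bool) \<Rightarrow> 'a set" where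
  "separated_pts n M le c = {x\<in>M. \<exists>i<n. border_point M le c i x}"

definition has_borders :: "nat \<Rightarrow> 'a set \<Rightarrow> ('a \<Rightarrow> 'a \<Rightarrow> bool) \<Rightarrow> ('a \<Rightarrow> nat \<Rightarrow> bool) \<Rightarrow> bool" where
  "has_borders n M le c \<longleftrightarrow>
     (\<forall>i<n. \<forall>x\<in>M. \<not> c x i \<longrightarrow> (\<exists>y\<in>M. le x y \<and> border_point M le c i y))"

definition p_morphism :: "nat \<Rightarrow> 'a set \<Rightarrow> ('a \<Rightarrow> 'a \<Rightarrow> bool) \<Rightarrow> ('a \<Rightarrow> nat \<Rightarrow> bool)
    \<Rightarrow> 'b set \<Rightarrow> ('b \<Rightarrow> 'b \<Rightarrow> bool) \<Rightarrow> ('b \<Rightarrow> nat \<Rightarrow> bool) \<Rightarrow> ('a \<Rightarrow> 'b) \<Rightarrow> bool" where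
  "p_morphism n M le c N le' c' f \<longleftrightarrow>
     (\<forall>x\<in>M. f x \<in> N) \<and>
     (\<forall>x\<in>M. \<forall>y\<in>M. le x y \<longrightarrow> le' (f x) (f y)) \<and>
     (\<forall>x\<in>M. \<forall>i<n. c' (f x) i = c x i) \<and>
     (\<forall>x\<in>M. \<forall>y\<in>N. le' (f x) y \<longrightarrow> (\<exists>x'\<in>M. le x x' \<and> f x' = y))"

definition upsets :: "'a set \<Rightarrow> ('a \<Rightarrow> 'a \<Rightarrow> bool) \<Rightarrow> 'a set set" where
  "upsets M le = {U. U \<subseteq> M \<and> (\<forall>x\<in>U. \<forall>y\<in>M. le x y \<longrightarrow> y \<in> U)}"

definition himp :: "'a set \<Rightarrow> ('a \<Rightarrow> 'a \<Rightarrow> bool) \<Rightarrow> 'a set \<Rightarrow> 'a set \<Rightarrow> 'a set" where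
  "himp M le U V = {x\<in>M. \<forall>y\<in>M. le x y \<longrightarrow> y \<in> U \<longrightarrow> y \<in> V}"

inductive_set imp_meet_gen :: "nat \<Rightarrow> 'a set \<Rightarrow> ('a \<Rightarrow> 'a \<Rightarrow> bool) \<Rightarrow> ('a \<Rightarrow> nat \<Rightarrow> bool) \<Rightarrow> 'a set set"
  for n M le c where
  gen_var: "i < n \<Longrightarrow> val M c i \<in> imp_meet_gen n M le c"
| gen_meet: "U \<in> imp_meet_gen n M le c \<Longrightarrow> V \<in> imp_meet_gen n M le c \<Longrightarrow> U \<inter> V \<in> imp_meet_gen n M le c"
| gen_imp: "U \<in> imp_meet_gen n M le c \<Longrightarrow> V \<in> imp_meet_gen n M le c \<Longrightarrow> himp M le U V \<in> imp_meet_gen n M le c"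

datatype form = Var nat | Bot | Conj form form | Disj form form | Imp form form

fun vars :: "form \<Rightarrow> nat set" where
  "vars (Var i) = {i}"
| "vars Bot = {}"
| "vars (Conj a b) = vars a \<union> vars b"
| "vars (Disj a b) = vars a \<union> vars b"
| "vars (Imp a b) = vars a \<union> vars b"

inductive ipc :: "form \<Rightarrow> bool" where
  ax_K: "ipc (Imp a (Imp b a))"
| ax_S: "ipc (Imp (Imp a (Imp b c)) (Imp (Imp a b) (Imp a c)))"
| ax_C1: "ipc (Imp (Conj a b) a)"
| ax_C2: "ipc (Imp (Conj a b) b)"
| ax_C3: "ipc (Imp a (Imp b (Conj a b)))"
| ax_D1: "ipc (Imp a (Disj a b))"
| ax_D2: "ipc (Imp b (Disj a b))"
| ax_D3: "ipc (Imp (Imp a c) (Imp (Imp b c) (Imp (Disj a b) c)))"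
| ax_Bot: "ipc (Imp Bot a)"
| mp: "ipc (Imp a b) \<Longrightarrow> ipc a \<Longrightarrow> ipc b"

definition fmls :: "nat \<Rightarrow> form set" where
  "fmls n = {a. vars a \<subseteq> {..<n}}"

text \<open>Prime theories over p_0..p_(n-1); these correspond exactly to the prime filters
 of the free Heyting algebra on n generators (the Lindenbaum algebra of IPC).\<close>
definition prime_theory :: "nat \<Rightarrow> form set \<Rightarrow> bool" where
  "prime_theory n T \<longleftrightarrow>
     T \<subseteq> fmls n \<and>
     (\<forall>a\<in>fmls n. ipc a \<longrightarrow> a \<in> T) \<and>
     (\<forall>a b. a \<in> T \<longrightarrow> Imp a b \<in> T \<longrightarrow> b \<in> T) \<and>
     Bot \<notin> T \<and>
     (\<forall>a b. Disj a b \<in> T \<longrightarrow> a \<in> T \<or> b \<in> T)"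

text \<open>Points of U(n): points of the canonical model with finite up-set; order is inclusion.\<close>
definition univ_pts :: "nat \<Rightarrow> form set set" where
  "univ_pts n = {T. prime_theory n T \<and> finite {S. prime_theory n S \<and> T \<subseteq> S}}"

definition univ_col :: "form set \<Rightarrow> nat \<Rightarrow> bool" where
  "univ_col T i \<longleftrightarrow> Var i \<in> T"

end

theory Submission
  imports Defs
begin

text \<open>
  Write \<open>N\<close> for \<open>M\<^sub>\<and>\<^sub>,\<^sub>\<rightarrow>\<close>. The map \<open>r \<circ> h\<close> sends an up-set \<open>U\<close> of \<open>N\<close> to the set of points of
  \<open>M\<close> all of whose separated successors are mapped into \<open>U\<close>. It is injective and commutes with
  meets and implications, and since \<open>M\<close> has borders it sends \<open>v(p\<^sub>i)\<close> to \<open>v(p\<^sub>i)\<close>. Hence it maps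
  the \<open>(\<and>,\<rightarrow>)\<close>-subalgebra of \<open>\<U>(N)\<close> generated by the \<open>v(p\<^sub>i)\<close> onto \<open>B\<close>.

  It remains to see that this subalgebra is all of \<open>\<U>(N)\<close>. \<open>N\<close> is an up-closed set of prime
  theories each having a border variable, so colours grow strictly upwards; as a point of the
  canonical model is determined by its colour and its proper successors, \<open>N\<close> is finite. Every
  up-set is a meet of complements of principal down-sets \<open>\<down>w\<close>. By induction on the colour of
  \<open>w\<close>, with border variable \<open>q\<close>, the complement of \<open>\<down>w\<close> is \<open>\<Psi>\<^sub>w \<rightarrow> v(q)\<close>, where \<open>\<Psi>\<^sub>w\<close> is a finite
  meet of implications between the \<open>v(p\<^sub>i)\<close> and the already definable complements of \<open>\<down>T\<close> for the
  proper successors \<open>T\<close> of \<open>w\<close>, chosen so that \<open>\<Psi>\<^sub>w\<close> holds at \<open>w\<close> and at no other point refuting \<open>q\<close>.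
\<close>

section \<open>Prime theories\<close>

text \<open>Derivations from a prime theory may pass through formulas with variables beyond \<open>p\<^sub>n\<^sub>-\<^sub>1\<close>;
  replacing those variables by \<open>\<bottom>\<close> brings them back into \<open>fmls n\<close>.\<close>
fun restrict_vars :: "nat \<Rightarrow> form \<Rightarrow> form" where
  "restrict_vars n (Var i) = (if i < n then Var i else Bot)"
| "restrict_vars n Bot = Bot"
| "restrict_vars n (Conj a b) = Conj (restrict_vars n a) (restrict_vars n b)"
| "restrict_vars n (Disj a b) = Disj (restrict_vars n a) (restrict_vars n b)"
| "restrict_vars n (Imp a b) = Imp (restrict_vars n a) (restrict_vars n b)"

lemma ipc_restrict_vars: "ipc a \<Longrightarrow> ipc (restrict_vars n a)"
proof (induction rule: ipc.induct)
  case (mp a b)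
  then show ?case using ipc.mp[of "restrict_vars n a" "restrict_vars n b"] by simp
qed (simp_all add: ax_K ax_S ax_C1 ax_C2 ax_C3 ax_D1 ax_D2 ax_D3 ax_Bot)

lemma restrict_vars_in_fmls: "restrict_vars n a \<in> fmls n"
  by (induction a) (auto simp: fmls_def)

lemma restrict_vars_id: "a \<in> fmls n \<Longrightarrow> restrict_vars n a = a"
  by (induction a) (auto simp: fmls_def)

lemma fmls_simps [simp]:
  "Var i \<in> fmls n \<longleftrightarrow> i < n"
  "Bot \<in> fmls n"
  "Conj a b \<in> fmls n \<longleftrightarrow> a \<in> fmls n \<and> b \<in> fmls n"
  "Disj a b \<in> fmls n \<longleftrightarrow> a \<in> fmls n \<and> b \<in> fmls n"
  "Imp a b \<in> fmls n \<longleftrightarrow> a \<in> fmls n \<and> b \<in> fmls n"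
  by (auto simp: fmls_def)

lemma
  assumes "prime_theory n T"
  shows prime_theory_subset_fmls: "T \<subseteq> fmls n"
    and prime_theory_ipc: "a \<in> fmls n \<Longrightarrow> ipc a \<Longrightarrow> a \<in> T"
    and prime_theory_mp: "a \<in> T \<Longrightarrow> Imp a b \<in> T \<Longrightarrow> b \<in> T"
    and prime_theory_Bot: "Bot \<notin> T"
    and prime_theory_Disj: "Disj a b \<in> T \<Longrightarrow> a \<in> T \<or> b \<in> T"
  using assms unfolding prime_theory_def by blast+

inductive derivable :: "form set \<Rightarrow> form \<Rightarrow> bool" for G where
  derivable_ipc: "ipc a \<Longrightarrow> derivable G a"
| derivable_hyp: "a \<in> G \<Longrightarrow> derivable G a"
| derivable_mp: "derivable G (Imp a b) \<Longrightarrow> derivable G a \<Longrightarrow> derivable G b"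

lemma derivable_mono: "derivable G a \<Longrightarrow> G \<subseteq> G' \<Longrightarrow> derivable G' a"
  by (induction rule: derivable.induct) (auto intro: derivable.intros)

lemma ipc_Imp_refl: "ipc (Imp a a)"
  by (rule mp[OF mp[OF ax_S ax_K] ax_K])

lemma derivable_deduction: "derivable (insert a G) b \<Longrightarrow> derivable G (Imp a b)"
proof (induction rule: derivable.induct)
  case (derivable_ipc b)
  then show ?case
    using derivable.derivable_mp[OF derivable.derivable_ipc[OF ax_K] derivable.derivable_ipc] by blast
next
  case (derivable_hyp b)
  then show ?case
    using derivable.derivable_ipc[OF ipc_Imp_refl]
      derivable.derivable_mp[OF derivable.derivable_ipc[OF ax_K] derivable.derivable_hyp] by auto
next
  case (derivable_mp b c)
  then show ?case
    using derivable.derivable_mp[OF derivable.derivable_mp[OF derivable.derivable_ipc[OF ax_S]]]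
    by blast
qed

lemma derivable_finite_subset: "derivable G a \<Longrightarrow> \<exists>G0\<subseteq>G. finite G0 \<and> derivable G0 a"
proof (induction rule: derivable.induct)
  case (derivable_ipc a)
  then show ?case using derivable.derivable_ipc by blast
next
  case (derivable_hyp a)
  then show ?case by (intro exI[of _ "{a}"]) (auto intro: derivable.derivable_hyp)
next
  case (derivable_mp a b)
  then obtain G1 G2 where "G1 \<subseteq> G" "finite G1" "derivable G1 (Imp a b)"
    and "G2 \<subseteq> G" "finite G2" "derivable G2 a" by blast
  then show ?case
    using derivable.derivable_mp[OF derivable_mono derivable_mono, of G1 a b "G1 \<union> G2" G2]
    by (intro exI[of _ "G1 \<union> G2"]) auto
qed

lemma prime_theory_derivable:
  assumes T: "prime_theory n T" and "derivable T a"
  shows "restrict_vars n a \<in> T"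
  using \<open>derivable T a\<close>
proof (induction rule: derivable.induct)
  case (derivable_ipc a)
  then show ?case by (intro prime_theory_ipc[OF T] restrict_vars_in_fmls ipc_restrict_vars)
next
  case (derivable_hyp a)
  then have "a \<in> fmls n" using prime_theory_subset_fmls[OF T] by blast
  then show ?case using derivable_hyp restrict_vars_id by simp
next
  case (derivable_mp a b)
  then show ?case using prime_theory_mp[OF T, of "restrict_vars n a"] by simp
qed

lemma prime_theory_if_maximal:
  assumes S: "S \<subseteq> fmls n" and b: "\<not> derivable S b"
    and maximal: "\<And>x. x \<in> fmls n \<Longrightarrow> \<not> derivable (insert x S) b \<Longrightarrow> x \<in> S"
  shows "prime_theory n S"
proof -
  have closed: "x \<in> S" if x: "derivable S x" "x \<in> fmls n" for x
  proof (rule maximal[OF x(2)])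
    show "\<not> derivable (insert x S) b"
      using b derivable_mp[OF derivable_deduction x(1)] by blast
  qed
  show ?thesis
    unfolding prime_theory_def
  proof (intro conjI allI impI ballI)
    show "S \<subseteq> fmls n" by fact
  next
    fix x assume "x \<in> fmls n" "ipc x"
    then show "x \<in> S" using closed derivable_ipc by blast
  next
    fix x y assume xy: "x \<in> S" "Imp x y \<in> S"
    have "y \<in> fmls n" using S xy(2) by auto
    then show "y \<in> S"
      using closed derivable_mp[OF derivable_hyp[OF xy(2)] derivable_hyp[OF xy(1)]] by blast
  next
    show "Bot \<notin> S" using b derivable_mp[OF derivable_ipc[OF ax_Bot] derivable_hyp] by blast
  next
    fix x y assume xy: "Disj x y \<in> S"
    show "x \<in> S \<or> y \<in> S"
    proof (rule ccontr)
      assume "\<not> (x \<in> S \<or> y \<in> S)"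
      moreover have "x \<in> fmls n" "y \<in> fmls n" using xy S by auto
      ultimately have "derivable S (Imp x b)" "derivable S (Imp y b)"
        using maximal derivable_deduction by blast+
      then have "derivable S b"
        using derivable_mp[OF derivable_mp[OF derivable_mp[OF derivable_ipc[OF ax_D3]]]
            derivable_hyp[OF xy]] by blast
      then show False using b by blast
    qed
  qed
qed

lemma prime_theory_extension:
  assumes T: "prime_theory n T" and ab: "a \<in> fmls n" "b \<in> fmls n" and "Imp a b \<notin> T"
  shows "\<exists>S. prime_theory n S \<and> T \<subseteq> S \<and> a \<in> S \<and> b \<notin> S"
proof -
  define A where "A = {S. insert a T \<subseteq> S \<and> S \<subseteq> fmls n \<and> \<not> derivable S b}"
  have "\<not> derivable (insert a T) b"
  proof
    assume "derivable (insert a T) b"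
    then have "restrict_vars n (Imp a b) \<in> T"
      by (intro prime_theory_derivable[OF T] derivable_deduction)
    then show False using \<open>Imp a b \<notin> T\<close> ab by (simp add: restrict_vars_id)
  qed
  then have "insert a T \<in> A" using prime_theory_subset_fmls[OF T] ab unfolding A_def by auto
  moreover have "\<Union>C \<in> A" if C: "C \<noteq> {}" "subset.chain A C" for C
  proof -
    have CA: "C \<subseteq> A" using C(2) by (simp add: subset_chain_def)
    have "\<not> derivable (\<Union>C) b"
    proof
      assume "derivable (\<Union>C) b"
      then obtain G0 where G0: "G0 \<subseteq> \<Union>C" "finite G0" "derivable G0 b"
        using derivable_finite_subset by blast
      then obtain B where "B \<in> C" "G0 \<subseteq> B" using finite_subset_Union_chain[OF G0(2,1) C] by blast
      then have "derivable B b" using derivable_mono[OF G0(3)] by blast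
      then show False using \<open>B \<in> C\<close> CA unfolding A_def by blast
    qed
    then show ?thesis using C CA unfolding A_def by auto
  qed
  ultimately obtain S where "S \<in> A" and S_max: "\<And>X. X \<in> A \<Longrightarrow> S \<subseteq> X \<Longrightarrow> X = S"
    using subset_Zorn_nonempty[of A] by blast
  then have S: "insert a T \<subseteq> S" "S \<subseteq> fmls n" "\<not> derivable S b" unfolding A_def by auto
  have "prime_theory n S"
  proof (rule prime_theory_if_maximal[OF S(2,3)])
    fix x assume "x \<in> fmls n" "\<not> derivable (insert x S) b"
    then have "insert x S \<in> A" using S unfolding A_def by auto
    then show "x \<in> S" using S_max by blast
  qed
  then show ?thesis using S derivable_hyp by blast
qed

lemma prime_theory_Conj_iff:
  assumes T: "prime_theory n T" and ab: "a \<in> fmls n" "b \<in> fmls n"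
  shows "Conj a b \<in> T \<longleftrightarrow> a \<in> T \<and> b \<in> T"
proof -
  have "Imp (Conj a b) a \<in> T" "Imp (Conj a b) b \<in> T" "Imp a (Imp b (Conj a b)) \<in> T"
    using ab by (auto intro: prime_theory_ipc[OF T] ax_C1 ax_C2 ax_C3)
  then show ?thesis using prime_theory_mp[OF T] by blast
qed

lemma prime_theory_Disj_iff:
  assumes T: "prime_theory n T" and ab: "a \<in> fmls n" "b \<in> fmls n"
  shows "Disj a b \<in> T \<longleftrightarrow> a \<in> T \<or> b \<in> T"
proof -
  have "Imp a (Disj a b) \<in> T" "Imp b (Disj a b) \<in> T"
    using ab by (auto intro: prime_theory_ipc[OF T] ax_D1 ax_D2)
  then show ?thesis using prime_theory_mp[OF T] prime_theory_Disj[OF T] by blast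
qed

lemma prime_theory_Imp_transfer:
  assumes w: "prime_theory n w" and w': "prime_theory n w'"
    and exts: "{S. prime_theory n S \<and> w \<subset> S} = {S. prime_theory n S \<and> w' \<subset> S}"
    and ab: "a \<in> fmls n" "b \<in> fmls n" and "a \<in> w \<longleftrightarrow> a \<in> w'" "b \<in> w \<longleftrightarrow> b \<in> w'"
    and "Imp a b \<in> w"
  shows "Imp a b \<in> w'"
proof (rule ccontr)
  assume "Imp a b \<notin> w'"
  then obtain S where S: "prime_theory n S" "w' \<subseteq> S" "a \<in> S" "b \<notin> S"
    using prime_theory_extension[OF w' ab] by blast
  show False
  proof (cases "S = w'")
    case True
    then show ?thesis using S assms(6-8) prime_theory_mp[OF w] by blast
  next
    case False
    then have "w \<subseteq> S" using exts S by auto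
    then show ?thesis using S \<open>Imp a b \<in> w\<close> prime_theory_mp[OF S(1)] by blast
  qed
qed

lemma prime_theory_eqI:
  assumes w: "prime_theory n w" and w': "prime_theory n w'"
    and vars: "\<And>i. i < n \<Longrightarrow> Var i \<in> w \<longleftrightarrow> Var i \<in> w'"
    and exts: "{S. prime_theory n S \<and> w \<subset> S} = {S. prime_theory n S \<and> w' \<subset> S}"
  shows "w = w'"
proof -
  have "a \<in> w \<longleftrightarrow> a \<in> w'" if "a \<in> fmls n" for a
    using that
  proof (induction a)
    case Bot
    then show ?case using prime_theory_Bot[OF w] prime_theory_Bot[OF w'] by blast
  next
    case (Conj a b)
    then show ?case by (simp add: prime_theory_Conj_iff[OF w] prime_theory_Conj_iff[OF w'])
  next
    case (Disj a b)
    then show ?case by (simp add: prime_theory_Disj_iff[OF w] prime_theory_Disj_iff[OF w'])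
  next
    case (Imp a b)
    then have "a \<in> fmls n" "b \<in> fmls n" "a \<in> w \<longleftrightarrow> a \<in> w'" "b \<in> w \<longleftrightarrow> b \<in> w'" by auto
    then show ?case
      using prime_theory_Imp_transfer[OF w w' exts] prime_theory_Imp_transfer[OF w' w exts[symmetric]]
      by blast
  qed (simp add: vars)
  then show ?thesis using prime_theory_subset_fmls[OF w] prime_theory_subset_fmls[OF w'] by blast
qed

lemma mem_val_iff: "x \<in> val M c i \<longleftrightarrow> x \<in> M \<and> c x i"
  by (simp add: val_def)

lemma mem_himp_iff: "x \<in> himp M le U V \<longleftrightarrow> x \<in> M \<and> (\<forall>y\<in>M. le x y \<longrightarrow> y \<in> U \<longrightarrow> y \<in> V)"
  by (simp add: himp_def)

lemma imp_meet_gen_subset_upsets: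
  assumes "is_model n M le c"
  shows "imp_meet_gen n M le c \<subseteq> upsets M le"
proof
  fix U assume "U \<in> imp_meet_gen n M le c"
  then show "U \<in> upsets M le"
  proof (induction rule: imp_meet_gen.induct)
    case (gen_var i)
    then show ?case using assms unfolding is_model_def upsets_def val_def by blast
  next
    case (gen_meet U V)
    then show ?case unfolding upsets_def by blast
  next
    case (gen_imp U V)
    have "y \<in> himp M le U V" if "x \<in> himp M le U V" "y \<in> M" "le x y" for x y
      using that assms unfolding is_model_def mem_himp_iff by meson
    then show ?case unfolding upsets_def himp_def by blast
  qed
qed

lemma is_model_subset: "is_model n K le c \<Longrightarrow> N \<subseteq> K \<Longrightarrow> is_model n N le c"
  unfolding is_model_def by blast

section \<open>Separated upsets of the universal model\<close>

definition strict_exts :: "nat \<Rightarrow> form set \<Rightarrow> form set set" where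
  "strict_exts n w = {S. prime_theory n S \<and> w \<subset> S}"

definition colour :: "nat \<Rightarrow> form set \<Rightarrow> nat set" where
  "colour n w = {i. i < n \<and> Var i \<in> w}"

definition border_var :: "nat \<Rightarrow> form set \<Rightarrow> nat \<Rightarrow> bool" where
  "border_var n w q \<longleftrightarrow> q < n \<and> Var q \<notin> w \<and> (\<forall>S\<in>strict_exts n w. Var q \<in> S)"

lemma colour_subset: "colour n w \<subseteq> {..<n}"
  by (auto simp: colour_def)

lemma finite_colour: "finite (colour n w)"
  using colour_subset finite_subset by blast

lemma card_colour_le: "card (colour n w) \<le> n"
  using card_mono[OF _ colour_subset] by simp

lemma colour_mono: "w \<subseteq> S \<Longrightarrow> colour n w \<subseteq> colour n S"
  by (auto simp: colour_def)

locale separated_upset =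
  fixes n :: nat and N :: "form set set"
  assumes n_pos: "n \<ge> 1"
    and prime_theory_N: "w \<in> N \<Longrightarrow> prime_theory n w"
    and N_upclosed: "w \<in> N \<Longrightarrow> prime_theory n S \<Longrightarrow> w \<subseteq> S \<Longrightarrow> S \<in> N"
    and border_var_exists: "w \<in> N \<Longrightarrow> \<exists>q. border_var n w q"
begin

lemma strict_exts_subset: "w \<in> N \<Longrightarrow> strict_exts n w \<subseteq> N"
  using N_upclosed unfolding strict_exts_def by blast

lemma mem_strict_exts_iff: "S \<in> N \<Longrightarrow> S \<in> strict_exts n w \<longleftrightarrow> w \<subset> S"
  using prime_theory_N unfolding strict_exts_def by blast

lemma card_colour_less:
  assumes "w \<in> N" "S \<in> strict_exts n w"
  shows "card (colour n w) < card (colour n S)"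
proof (rule psubset_card_mono[OF finite_colour])
  obtain q where "border_var n w q" using border_var_exists \<open>w \<in> N\<close> by blast
  then have "q \<in> colour n S - colour n w" using assms(2) by (auto simp: border_var_def colour_def)
  moreover have "colour n w \<subseteq> colour n S"
    using assms(2) colour_mono unfolding strict_exts_def by blast
  ultimately show "colour n w \<subset> colour n S" by blast
qed

lemma eq_if_same_colour_exts:
  assumes "w \<in> N" "w' \<in> N" "colour n w = colour n w'" "strict_exts n w = strict_exts n w'"
  shows "w = w'"
proof (rule prime_theory_eqI[OF prime_theory_N prime_theory_N])
  show "Var i \<in> w \<longleftrightarrow> Var i \<in> w'" if "i < n" for i
    using assms(3) that unfolding colour_def by blast
qed (use assms in \<open>auto simp: strict_exts_def\<close>)

lemma finite_N: "finite N"
proof -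
  txt \<open>Downward induction on the number of colours: a point is determined by its colour and its
    successors, and these have strictly more colours.\<close>
  define level where "level m = {w \<in> N. m \<le> card (colour n w)}" for m
  have "finite (level m)" if "m \<le> Suc n" for m
    using that
  proof (induction m rule: inc_induct)
    case base
    then show ?case using card_colour_le by (auto simp: level_def not_less_eq_eq[symmetric])
  next
    case (step m)
    show ?case
    proof (rule inj_on_finite)
      show "inj_on (\<lambda>w. (colour n w, strict_exts n w)) (level m)"
        by (rule inj_onI) (simp add: level_def eq_if_same_colour_exts)
      have "strict_exts n w \<subseteq> level (Suc m)" if "w \<in> level m" for w
        using that strict_exts_subset card_colour_less by (fastforce simp: level_def)
      then show "(\<lambda>w. (colour n w, strict_exts n w)) ` level m
          \<subseteq> Pow {..<n} \<times> Pow (level (Suc m))"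
        using colour_subset[of n] by blast
    qed (use step.IH in simp)
  qed
  from this[of 0] show ?thesis by (simp add: level_def)
qed

abbreviation Gen :: "form set set set" where
  "Gen \<equiv> imp_meet_gen n N (\<subseteq>) univ_col"

abbreviation atom :: "nat \<Rightarrow> form set set" where
  "atom i \<equiv> val N univ_col i"

abbreviation imp :: "form set set \<Rightarrow> form set set \<Rightarrow> form set set" where
  "imp U V \<equiv> himp N (\<subseteq>) U V"

lemma mem_atom_iff: "x \<in> atom i \<longleftrightarrow> x \<in> N \<and> Var i \<in> x"
  by (simp add: mem_val_iff univ_col_def)

lemma is_model_N: "is_model n N (\<subseteq>) univ_col"
  by (auto simp: is_model_def univ_col_def)

lemma N_in_Gen: "N \<in> Gen"
proof -
  have "imp (atom 0) (atom 0) \<in> Gen"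
    using n_pos by (intro imp_meet_gen.gen_imp imp_meet_gen.gen_var) auto
  moreover have "imp (atom 0) (atom 0) = N" by (auto simp: himp_def)
  ultimately show ?thesis by simp
qed

lemma Inter_in_Gen: "finite F \<Longrightarrow> F \<subseteq> Gen \<Longrightarrow> N \<inter> \<Inter>F \<in> Gen"
proof (induction rule: finite_induct)
  case empty
  then show ?case using N_in_Gen by simp
next
  case (insert U F)
  then have "U \<inter> (N \<inter> \<Inter>F) \<in> Gen" by (auto intro: imp_meet_gen.gen_meet)
  moreover have "U \<subseteq> N"
    using insert imp_meet_gen_subset_upsets[OF is_model_N] by (auto simp: upsets_def)
  ultimately show ?case by (simp add: Int_assoc Int_absorb2 Int_left_commute)
qed

definition not_below :: "form set \<Rightarrow> form set set" where
  "not_below T = {x \<in> N. \<not> x \<subseteq> T}"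

text \<open>For a point \<open>v\<close> refuting \<open>s\<close>, membership in \<open>profile C s S F\<close> says that \<open>v\<close> has colour \<open>C\<close>
  and border variable \<open>s\<close>, and that, if all proper successors of \<open>v\<close> lie in \<open>F\<close>, they are
  exactly the points of \<open>S\<close>.\<close>
definition profile :: "nat set \<Rightarrow> nat \<Rightarrow> form set set \<Rightarrow> form set set \<Rightarrow> form set set" where
  "profile C s S F = N \<inter> \<Inter>(atom ` C \<union> (\<lambda>r. imp (atom r) (atom s)) ` ({..<n} - C)
      \<union> (\<lambda>T. imp (not_below T) (atom s)) ` S \<union> (\<lambda>T. imp (atom s) (not_below T)) ` (F - S))"

lemma mem_profile_iff:
  "v \<in> profile C s S F \<longleftrightarrow> v \<in> N \<and> (\<forall>i\<in>C. v \<in> atom i)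
    \<and> (\<forall>r\<in>{..<n} - C. v \<in> imp (atom r) (atom s))
    \<and> (\<forall>T\<in>S. v \<in> imp (not_below T) (atom s)) \<and> (\<forall>T\<in>F - S. v \<in> imp (atom s) (not_below T))"
  unfolding profile_def Inter_Un_distrib by simp

lemma profile_in_Gen:
  assumes "C \<subseteq> {..<n}" "s < n" "finite F" "S \<subseteq> F" "\<forall>T\<in>F. not_below T \<in> Gen"
  shows "profile C s S F \<in> Gen"
  unfolding profile_def
proof (rule Inter_in_Gen)
  show "finite (atom ` C \<union> (\<lambda>r. imp (atom r) (atom s)) ` ({..<n} - C)
      \<union> (\<lambda>T. imp (not_below T) (atom s)) ` S \<union> (\<lambda>T. imp (atom s) (not_below T)) ` (F - S))"
    using finite_subset[OF assms(1)] finite_subset[OF assms(4,3)] assms(3) by simp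
  show "atom ` C \<union> (\<lambda>r. imp (atom r) (atom s)) ` ({..<n} - C)
      \<union> (\<lambda>T. imp (not_below T) (atom s)) ` S \<union> (\<lambda>T. imp (atom s) (not_below T)) ` (F - S) \<subseteq> Gen"
    using assms by (auto intro: imp_meet_gen.gen_var imp_meet_gen.gen_imp)
qed

lemma colour_subset_if_mem_profile:
  assumes "v \<in> profile C s S F" "y \<in> N" "v \<subseteq> y" "Var s \<notin> y"
  shows "colour n y \<subseteq> C"
  using assms unfolding mem_profile_iff mem_himp_iff mem_atom_iff colour_def by blast

lemma colour_eq_if_mem_profile:
  assumes v: "v \<in> profile C s S F" and "Var s \<notin> v" and "C \<subseteq> {..<n}"
  shows "colour n v = C"
proof
  show "colour n v \<subseteq> C" using colour_subset_if_mem_profile[OF v] assms v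
    unfolding mem_profile_iff by blast
  show "C \<subseteq> colour n v" using assms unfolding mem_profile_iff mem_atom_iff colour_def by blast
qed

lemma border_var_if_mem_profile:
  assumes v: "v \<in> profile C s S F" and "Var s \<notin> v" and "C \<subseteq> {..<n}" and "s < n"
  shows "border_var n v s"
  unfolding border_var_def
proof (intro conjI ballI)
  have vN: "v \<in> N" using v unfolding mem_profile_iff by blast
  fix S' assume S': "S' \<in> strict_exts n v"
  show "Var s \<in> S'"
  proof (rule ccontr)
    assume "Var s \<notin> S'"
    moreover have "S' \<in> N" "v \<subseteq> S'"
      using S' strict_exts_subset[OF vN] by (auto simp: strict_exts_def)
    ultimately have "colour n S' \<subseteq> colour n v"
      using colour_subset_if_mem_profile[OF v] colour_eq_if_mem_profile[OF assms(1-3)] by blast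
    then show False using card_colour_less[OF vN S'] card_mono[OF finite_colour] by (simp add: leD)
  qed
qed (use assms in auto)

lemma strict_exts_supset_if_mem_profile:
  assumes v: "v \<in> profile C s S F" and "Var s \<notin> v" and S: "\<forall>T\<in>S. Var s \<in> T \<and> T \<in> N"
  shows "S \<subseteq> strict_exts n v"
proof
  fix T assume T: "T \<in> S"
  have vN: "v \<in> N" and vT: "v \<in> imp (not_below T) (atom s)"
    using v T unfolding mem_profile_iff by auto
  have "v \<notin> atom s" using \<open>Var s \<notin> v\<close> by (simp add: mem_atom_iff)
  then have "v \<notin> not_below T" using vT vN by (auto simp: mem_himp_iff)
  then have "v \<subseteq> T" using vN by (simp add: not_below_def)
  moreover have "v \<noteq> T" using T S \<open>Var s \<notin> v\<close> by auto
  ultimately show "T \<in> strict_exts n v" using S T mem_strict_exts_iff by auto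
qed

lemma strict_exts_subset_if_mem_profile:
  assumes v: "v \<in> profile C s S F" and s: "border_var n v s" and "strict_exts n v \<subseteq> F"
  shows "strict_exts n v \<subseteq> S"
proof
  fix T assume T: "T \<in> strict_exts n v"
  show "T \<in> S"
  proof (rule ccontr)
    assume "T \<notin> S"
    then have "v \<in> imp (atom s) (not_below T)"
      using v T assms(3) unfolding mem_profile_iff by blast
    moreover have vN: "v \<in> N" using v unfolding mem_profile_iff by blast
    moreover have "T \<in> atom s" "v \<subseteq> T"
      using T strict_exts_subset[OF vN] s
      by (auto simp: strict_exts_def border_var_def mem_atom_iff)
    ultimately have "T \<in> not_below T" by (auto simp: mem_himp_iff mem_atom_iff)
    then show False by (simp add: not_below_def)
  qed
qed

lemma mem_profile_self:
  assumes z: "z \<in> N" and s: "border_var n z s" and F: "F \<subseteq> N"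
  shows "z \<in> profile (colour n z) s (strict_exts n z) F"
proof -
  have "Var s \<notin> z" using s by (simp add: border_var_def)
  moreover have "Var s \<in> y" if "y \<in> N" "z \<subseteq> y" "y \<noteq> z" for y
    using that s mem_strict_exts_iff[of y z] unfolding border_var_def by blast
  moreover have "T \<in> strict_exts n z \<longleftrightarrow> z \<subset> T" if "T \<in> F" for T
    using that F mem_strict_exts_iff by blast
  moreover have "z \<subseteq> T" if "T \<in> strict_exts n z" for T
    using that by (auto simp: strict_exts_def)
  ultimately show ?thesis
    using z unfolding mem_profile_iff mem_himp_iff mem_atom_iff
    by (auto simp: colour_def not_below_def) blast+
qed

definition unrealized :: "form set set \<Rightarrow> (nat set \<times> nat \<times> form set set) set" where
  "unrealized F = {(C, s, S). C \<subseteq> {..<n} \<and> s < n \<and> S \<subseteq> F \<and> (\<forall>T\<in>S. Var s \<in> T)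
      \<and> \<not> (\<exists>v\<in>F. colour n v = C \<and> strict_exts n v = S)}"

definition guard :: "nat \<Rightarrow> form set set \<Rightarrow> nat set \<times> nat \<times> form set set \<Rightarrow> form set set" where
  "guard q F = (\<lambda>(C, s, S). imp (atom q) (imp (profile C s S F) (atom s)))"

text \<open>\<open>char_set w q\<close> is the \<open>\<Psi>\<^sub>w\<close> of the proof idea: the profile of \<open>w\<close>, together with guards saying
  that no point above a \<open>q\<close>-point refutes \<open>s\<close> while having a profile \<open>(C, s, S)\<close> that is not
  realised by a successor of \<open>w\<close>.\<close>
definition char_set :: "form set \<Rightarrow> nat \<Rightarrow> form set set" where
  "char_set w q = profile (colour n w) q (strict_exts n w) (strict_exts n w)
     \<inter> (N \<inter> \<Inter>(guard q (strict_exts n w) ` unrealized (strict_exts n w)))"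

lemma char_set_in_Gen:
  assumes "w \<in> N" "q < n" and IH: "\<forall>T\<in>strict_exts n w. not_below T \<in> Gen"
  shows "char_set w q \<in> Gen"
  unfolding char_set_def
proof (rule imp_meet_gen.gen_meet)
  have fin: "finite (strict_exts n w)"
    using finite_N strict_exts_subset[OF \<open>w \<in> N\<close>] finite_subset by blast
  show "profile (colour n w) q (strict_exts n w) (strict_exts n w) \<in> Gen"
    by (rule profile_in_Gen[OF colour_subset \<open>q < n\<close> fin subset_refl IH])
  have "unrealized (strict_exts n w) \<subseteq> Pow {..<n} \<times> {..<n} \<times> Pow (strict_exts n w)"
    by (auto simp: unrealized_def)
  then have "finite (unrealized (strict_exts n w))" using fin finite_subset by blast
  moreover have "guard q (strict_exts n w) t \<in> Gen" if "t \<in> unrealized (strict_exts n w)" for t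
    using that \<open>q < n\<close> profile_in_Gen[OF _ _ fin _ IH]
    by (auto simp: unrealized_def guard_def intro!: imp_meet_gen.gen_imp imp_meet_gen.gen_var)
  ultimately show "N \<inter> \<Inter>(guard q (strict_exts n w) ` unrealized (strict_exts n w)) \<in> Gen"
    by (intro Inter_in_Gen) auto
qed

lemma mem_guard_self:
  assumes w: "w \<in> N" "border_var n w q" and t: "t \<in> unrealized (strict_exts n w)"
  shows "w \<in> guard q (strict_exts n w) t"
proof -
  obtain C s S where t_eq: "t = (C, s, S)" by (cases t)
  have C: "C \<subseteq> {..<n}" "s < n" "S \<subseteq> strict_exts n w" "\<forall>T\<in>S. Var s \<in> T"
    and unreal: "\<not> (\<exists>v\<in>strict_exts n w. colour n v = C \<and> strict_exts n v = S)"
    using t unfolding t_eq unrealized_def by auto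
  have "v \<in> atom s" if v: "v \<in> N" "w \<subset> v" "v \<in> profile C s S (strict_exts n w)" for v
  proof (rule ccontr)
    assume "v \<notin> atom s"
    then have vs: "Var s \<notin> v" using v by (simp add: mem_atom_iff)
    have vw: "v \<in> strict_exts n w" using v mem_strict_exts_iff by blast
    have "S \<subseteq> strict_exts n v"
      using strict_exts_supset_if_mem_profile[OF v(3) vs] C strict_exts_subset[OF w(1)] by blast
    moreover have "strict_exts n v \<subseteq> strict_exts n w"
      using v(2) by (auto simp: strict_exts_def)
    ultimately have "strict_exts n v = S"
      using strict_exts_subset_if_mem_profile[OF v(3) border_var_if_mem_profile[OF v(3) vs C(1,2)]]
      by blast
    then show False using unreal vw colour_eq_if_mem_profile[OF v(3) vs C(1)] by blast
  qed
  moreover have "w \<subset> y" if "y \<in> atom q" "w \<subseteq> y" for y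
    using that w(2) by (auto simp: mem_atom_iff border_var_def)
  ultimately show ?thesis
    using w(1) unfolding t_eq guard_def by (auto simp: mem_himp_iff)
qed

lemma strict_exts_subset_if_guarded:
  assumes y: "y \<in> N" and F: "F \<subseteq> N" and q: "\<forall>T\<in>strict_exts n y. Var q \<in> T"
    and guarded: "\<forall>t\<in>unrealized F. y \<in> guard q F t"
  shows "strict_exts n y \<subseteq> F"
proof (rule ccontr)
  assume "\<not> strict_exts n y \<subseteq> F"
  moreover have "finite (strict_exts n y - F)"
    using finite_N strict_exts_subset[OF y] finite_subset by blast
  ultimately obtain z where z: "z \<in> strict_exts n y - F"
    and z_max: "\<And>u. u \<in> strict_exts n y - F \<Longrightarrow> z \<subseteq> u \<Longrightarrow> z = u"
    using finite_has_maximal[of "strict_exts n y - F"] by blast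
  have zN: "z \<in> N" using z strict_exts_subset[OF y] by blast
  obtain s where s: "border_var n z s" using border_var_exists[OF zN] by blast
  have exts_z: "strict_exts n z \<subseteq> F"
    using z z_max by (auto simp: strict_exts_def)
  have "(colour n z, s, strict_exts n z) \<in> unrealized F"
    using s exts_z z eq_if_same_colour_exts[OF _ zN] F colour_subset[of n z]
    by (auto simp: unrealized_def border_var_def)
  then have "y \<in> guard q F (colour n z, s, strict_exts n z)" using guarded by blast
  moreover have "z \<in> atom q" "y \<subseteq> z" using z zN q by (auto simp: mem_atom_iff strict_exts_def)
  ultimately have "z \<in> imp (profile (colour n z) s (strict_exts n z) F) (atom s)"
    using zN by (auto simp: guard_def mem_himp_iff)
  then have "z \<in> atom s" using mem_profile_self[OF zN s F] by (auto simp: mem_himp_iff)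
  then show False using s by (simp add: border_var_def mem_atom_iff)
qed

lemma mem_char_set_self:
  assumes "w \<in> N" "border_var n w q"
  shows "w \<in> char_set w q"
  using assms mem_profile_self[OF assms strict_exts_subset] mem_guard_self
  unfolding char_set_def by blast

lemma char_set_unique:
  assumes w: "w \<in> N" "border_var n w q" and y: "y \<in> N" "y \<in> char_set w q" "Var q \<notin> y"
  shows "y = w"
proof -
  let ?F = "strict_exts n w"
  have y_profile: "y \<in> profile (colour n w) q ?F ?F" using y(2) by (simp add: char_set_def)
  have q: "q < n" "\<forall>T\<in>?F. Var q \<in> T \<and> T \<in> N"
    using w strict_exts_subset[OF w(1)] by (auto simp: border_var_def)
  have "border_var n y q"
    by (rule border_var_if_mem_profile[OF y_profile y(3) colour_subset q(1)])
  then have "strict_exts n y \<subseteq> ?F"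
    using strict_exts_subset_if_guarded[OF y(1) strict_exts_subset[OF w(1)]] y(2)
    by (auto simp: char_set_def border_var_def)
  moreover have "?F \<subseteq> strict_exts n y"
    by (rule strict_exts_supset_if_mem_profile[OF y_profile y(3) q(2)])
  moreover have "colour n y = colour n w"
    by (rule colour_eq_if_mem_profile[OF y_profile y(3) colour_subset])
  ultimately show ?thesis using eq_if_same_colour_exts[OF y(1) w(1)] by blast
qed

lemma not_below_eq_imp_char_set:
  assumes w: "w \<in> N" "border_var n w q"
  shows "not_below w = imp (char_set w q) (atom q)"
proof (intro set_eqI iffI)
  fix x assume x: "x \<in> not_below w"
  have "y \<in> atom q" if "y \<in> N" "x \<subseteq> y" "y \<in> char_set w q" for y
    using that x char_set_unique[OF w that(1,3)] by (auto simp: not_below_def mem_atom_iff)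
  then show "x \<in> imp (char_set w q) (atom q)" using x by (simp add: not_below_def mem_himp_iff)
next
  fix x assume x: "x \<in> imp (char_set w q) (atom q)"
  have "w \<notin> atom q" using w(2) by (simp add: border_var_def mem_atom_iff)
  then have "\<not> x \<subseteq> w" using x w(1) mem_char_set_self[OF w] by (auto simp: mem_himp_iff)
  then show "x \<in> not_below w" using x by (simp add: not_below_def mem_himp_iff)
qed

lemma not_below_in_Gen: "w \<in> N \<Longrightarrow> not_below w \<in> Gen"
proof (induction w rule: measure_induct_rule[where f = "\<lambda>w. n - card (colour n w)"])
  case (less w)
  obtain q where q: "border_var n w q" using border_var_exists[OF less.prems] by blast
  have "not_below T \<in> Gen" if T: "T \<in> strict_exts n w" for T
  proof (rule less.IH)
    show "n - card (colour n T) < n - card (colour n w)"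
      using card_colour_less[OF less.prems T] card_colour_le[of n T] by linarith
    show "T \<in> N" using T strict_exts_subset[OF less.prems] by blast
  qed
  then have "char_set w q \<in> Gen"
    using char_set_in_Gen[OF less.prems] q by (simp add: border_var_def)
  then show ?case
    using not_below_eq_imp_char_set[OF less.prems q] q
    by (auto simp: border_var_def intro: imp_meet_gen.gen_imp imp_meet_gen.gen_var)
qed

lemma upsets_eq_imp_meet_gen: "upsets N (\<subseteq>) = Gen"
proof
  show "Gen \<subseteq> upsets N (\<subseteq>)" by (rule imp_meet_gen_subset_upsets[OF is_model_N])
  show "upsets N (\<subseteq>) \<subseteq> Gen"
  proof
    fix U assume U: "U \<in> upsets N (\<subseteq>)"
    then have "U = N \<inter> \<Inter>(not_below ` (N - U))"
      by (auto simp: upsets_def not_below_def)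
    moreover have "finite (not_below ` (N - U))" using finite_N by simp
    ultimately show "U \<in> Gen"
      using Inter_in_Gen not_below_in_Gen by (metis Diff_subset image_subset_iff subsetD)
  qed
qed

end

section \<open>Pulling up-sets back along the p-morphism\<close>

definition pullback :: "'a set \<Rightarrow> ('a \<Rightarrow> 'a \<Rightarrow> bool) \<Rightarrow> 'a set \<Rightarrow> ('a \<Rightarrow> 'b) \<Rightarrow> 'b set \<Rightarrow> 'a set" where
  "pullback M le Ms f U = {x \<in> M. \<forall>y\<in>Ms. le x y \<longrightarrow> f y \<in> U}"

locale separated_pmorphism =
  fixes n :: nat and M :: "'a set" and le :: "'a \<Rightarrow> 'a \<Rightarrow> bool" and c :: "'a \<Rightarrow> nat \<Rightarrow> bool"
    and K :: "'b set" and le' :: "'b \<Rightarrow> 'b \<Rightarrow> bool" and c' :: "'b \<Rightarrow> nat \<Rightarrow> bool"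
    and f :: "'a \<Rightarrow> 'b"
  assumes model_M: "is_model n M le c" and model_K: "is_model n K le' c'"
    and borders: "has_borders n M le c"
    and pmorphism: "p_morphism n (separated_pts n M le c) le c K le' c' f"
begin

abbreviation Ms :: "'a set" where
  "Ms \<equiv> separated_pts n M le c"

abbreviation N :: "'b set" where
  "N \<equiv> f ` Ms"

abbreviation pull :: "'b set \<Rightarrow> 'a set" where
  "pull \<equiv> pullback M le Ms f"

lemma Ms_subset: "Ms \<subseteq> M"
  by (auto simp: separated_pts_def)

lemma
  shows M_refl: "x \<in> M \<Longrightarrow> le x x"
    and M_trans: "x \<in> M \<Longrightarrow> y \<in> M \<Longrightarrow> z \<in> M \<Longrightarrow> le x y \<Longrightarrow> le y z \<Longrightarrow> le x z"
    and M_colour_mono: "x \<in> M \<Longrightarrow> y \<in> M \<Longrightarrow> le x y \<Longrightarrow> i < n \<Longrightarrow> c x i \<Longrightarrow> c y i"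
  using model_M unfolding is_model_def by blast+

lemma
  shows f_in: "x \<in> Ms \<Longrightarrow> f x \<in> K"
    and f_mono: "x \<in> Ms \<Longrightarrow> y \<in> Ms \<Longrightarrow> le x y \<Longrightarrow> le' (f x) (f y)"
    and f_colour: "x \<in> Ms \<Longrightarrow> i < n \<Longrightarrow> c' (f x) i = c x i"
    and f_back: "x \<in> Ms \<Longrightarrow> T \<in> K \<Longrightarrow> le' (f x) T \<Longrightarrow> \<exists>x'\<in>Ms. le x x' \<and> f x' = T"
  using pmorphism unfolding p_morphism_def by blast+

lemma is_model_image: "is_model n N le' c'"
  using is_model_subset[OF model_K] f_in by blast

lemma mem_pull_iff: "x \<in> pull U \<longleftrightarrow> x \<in> M \<and> (\<forall>y\<in>Ms. le x y \<longrightarrow> f y \<in> U)"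
  by (simp add: pullback_def)

lemma pull_Int: "pull (U \<inter> V) = pull U \<inter> pull V"
  by (auto simp: pullback_def)

text \<open>This is where borders are needed.\<close>
lemma pull_val: "i < n \<Longrightarrow> pull (val N c' i) = val M c i"
proof (intro set_eqI iffI)
  fix x assume i: "i < n" and x: "x \<in> pull (val N c' i)"
  then have xM: "x \<in> M" and above: "\<And>y. y \<in> Ms \<Longrightarrow> le x y \<Longrightarrow> c y i"
    using f_colour by (auto simp: mem_pull_iff mem_val_iff)
  have "c x i"
  proof (rule ccontr)
    assume "\<not> c x i"
    then obtain y where "le x y" "border_point M le c i y"
      using borders xM i unfolding has_borders_def by blast
    moreover from this have "y \<in> Ms" using i by (auto simp: separated_pts_def border_point_def)
    ultimately show False using above by (simp add: border_point_def)
  qed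
  then show "x \<in> val M c i" using xM by (simp add: mem_val_iff)
next
  fix x assume "i < n" "x \<in> val M c i"
  then show "x \<in> pull (val N c' i)"
    using M_colour_mono f_colour Ms_subset by (auto simp: mem_pull_iff mem_val_iff)
qed

lemma pull_himp:
  assumes U: "U \<in> upsets N le'"
  shows "pull (himp N le' U V) = himp M le (pull U) (pull V)"
proof (intro set_eqI iffI)
  fix x assume x: "x \<in> pull (himp N le' U V)"
  then have xM: "x \<in> M" by (simp add: mem_pull_iff)
  have "f z \<in> V" if y: "y \<in> M" "le x y" "y \<in> pull U" and z: "z \<in> Ms" "le y z" for y z
  proof -
    have "le x z" using M_trans[OF xM y(1) _ y(2) z(2)] z(1) Ms_subset by blast
    then have "f z \<in> himp N le' U V" using x z(1) by (simp add: mem_pull_iff)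
    moreover have "f z \<in> U" using y(3) z by (simp add: mem_pull_iff)
    moreover have "le' (f z) (f z)" using model_K f_in[OF z(1)] by (simp add: is_model_def)
    ultimately show ?thesis using z(1) by (simp add: mem_himp_iff)
  qed
  then show "x \<in> himp M le (pull U) (pull V)"
    using xM by (simp add: mem_himp_iff mem_pull_iff)
next
  fix x assume x: "x \<in> himp M le (pull U) (pull V)"
  then have xM: "x \<in> M" by (simp add: mem_himp_iff)
  have "T \<in> V" if y: "y \<in> Ms" "le x y" and T: "T \<in> N" "le' (f y) T" "T \<in> U" for y T
  proof -
    have "T \<in> K" using T(1) f_in by blast
    then obtain y' where y': "y' \<in> Ms" "le y y'" "f y' = T"
      using f_back[OF y(1) _ T(2)] by blast
    have y'M: "y' \<in> M" and yM: "y \<in> M" using y(1) y'(1) Ms_subset by blast+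
    have "f z \<in> U" if "z \<in> Ms" "le y' z" for z
      using U T(3) y'(3) f_mono[OF y'(1) that] that(1) unfolding upsets_def by blast
    then have "y' \<in> pull U" using y'M by (simp add: mem_pull_iff)
    moreover have "le x y'" using M_trans[OF xM yM y'M y(2) y'(2)] .
    ultimately have "y' \<in> pull V" using x y'M by (simp add: mem_himp_iff)
    then show ?thesis using y' M_refl[OF y'M] unfolding mem_pull_iff by blast
  qed
  then show "x \<in> pull (himp N le' U V)"
    using xM by (auto simp: mem_himp_iff mem_pull_iff)
qed

lemma inj_on_pull: "inj_on pull (upsets N le')"
proof -
  have "U \<subseteq> V" if U: "U \<in> upsets N le'" and "pull U = pull V" for U V
  proof
    fix T assume "T \<in> U"
    then obtain x where x: "x \<in> Ms" "T = f x" using U by (auto simp: upsets_def)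
    then have "x \<in> pull U"
      using U \<open>T \<in> U\<close> f_mono Ms_subset by (auto simp: mem_pull_iff upsets_def)
    then have "x \<in> pull V" using \<open>pull U = pull V\<close> by simp
    then show "T \<in> V" using x M_refl Ms_subset by (auto simp: mem_pull_iff)
  qed
  then show ?thesis by (intro inj_onI) (metis subset_antisym)
qed

lemma imp_meet_gen_eq_image_pull: "imp_meet_gen n M le c = pull ` imp_meet_gen n N le' c'"
proof
  have upsets: "imp_meet_gen n N le' c' \<subseteq> upsets N le'"
    by (rule imp_meet_gen_subset_upsets[OF is_model_image])
  show "imp_meet_gen n M le c \<subseteq> pull ` imp_meet_gen n N le' c'"
  proof
    fix X assume "X \<in> imp_meet_gen n M le c"
    then show "X \<in> pull ` imp_meet_gen n N le' c'"
    proof (induction rule: imp_meet_gen.induct)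
      case (gen_var i)
      then have "pull (val N c' i) = val M c i" "val N c' i \<in> imp_meet_gen n N le' c'"
        by (simp_all add: pull_val imp_meet_gen.gen_var)
      then show ?case by force
    next
      case (gen_meet X Y)
      then obtain U V where "U \<in> imp_meet_gen n N le' c'" "V \<in> imp_meet_gen n N le' c'"
        "X = pull U" "Y = pull V" by blast
      then show ?case by (auto simp: pull_Int[symmetric] intro: imp_meet_gen.gen_meet)
    next
      case (gen_imp X Y)
      then obtain U V where UV: "U \<in> imp_meet_gen n N le' c'" "V \<in> imp_meet_gen n N le' c'"
        and "X = pull U" "Y = pull V" by blast
      then have "himp M le X Y = pull (himp N le' U V)" using pull_himp upsets by blast
      then show ?case using UV by (auto intro: imp_meet_gen.gen_imp)
    qed
  qed
  show "pull ` imp_meet_gen n N le' c' \<subseteq> imp_meet_gen n M le c"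
  proof
    fix X assume "X \<in> pull ` imp_meet_gen n N le' c'"
    then obtain U where "U \<in> imp_meet_gen n N le' c'" "X = pull U" by blast
    then show "X \<in> imp_meet_gen n M le c"
    proof (induction U arbitrary: X rule: imp_meet_gen.induct)
      case (gen_var i)
      then show ?case by (simp add: pull_val imp_meet_gen.gen_var)
    next
      case (gen_meet U V)
      then show ?case by (simp add: pull_Int imp_meet_gen.gen_meet)
    next
      case (gen_imp U V)
      then have "X = himp M le (pull U) (pull V)" using pull_himp upsets by blast
      then show ?case using gen_imp.IH by (simp add: imp_meet_gen.gen_imp)
    qed
  qed
qed

end

lemma is_model_univ: "is_model n (univ_pts n) (\<subseteq>) univ_col"
  by (auto simp: is_model_def univ_col_def)

lemma univ_pts_upclosed:
  assumes "w \<in> univ_pts n" "prime_theory n S" "w \<subseteq> S"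
  shows "S \<in> univ_pts n"
proof -
  have "finite {S'. prime_theory n S' \<and> w \<subseteq> S'}" using assms(1) by (simp add: univ_pts_def)
  then have "finite {S'. prime_theory n S' \<and> S \<subseteq> S'}"
    by (rule finite_subset[rotated]) (use assms(3) in auto)
  then show ?thesis using assms(2) by (simp add: univ_pts_def)
qed

lemma separated_upset_pmorphism_image:
  assumes "n \<ge> 1"
    and f: "p_morphism n (separated_pts n M le c) le c (univ_pts n) (\<subseteq>) univ_col f"
  shows "separated_upset n (f ` separated_pts n M le c)"
proof
  let ?Ms = "separated_pts n M le c"
  have f_univ: "\<And>x. x \<in> ?Ms \<Longrightarrow> f x \<in> univ_pts n"
    and f_colour: "\<And>x i. x \<in> ?Ms \<Longrightarrow> i < n \<Longrightarrow> Var i \<in> f x \<longleftrightarrow> c x i"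
    and f_back: "\<And>x T. x \<in> ?Ms \<Longrightarrow> T \<in> univ_pts n \<Longrightarrow> f x \<subseteq> T \<Longrightarrow> \<exists>x'\<in>?Ms. le x x' \<and> f x' = T"
    using f unfolding p_morphism_def univ_col_def by blast+
  show "n \<ge> 1" by fact
  show "prime_theory n w" if "w \<in> f ` ?Ms" for w
    using that f_univ by (auto simp: univ_pts_def)
  show "S \<in> f ` ?Ms" if "w \<in> f ` ?Ms" "prime_theory n S" "w \<subseteq> S" for w S
    using that f_back f_univ univ_pts_upclosed by (metis imageE image_eqI)
  show "\<exists>q. border_var n w q" if "w \<in> f ` ?Ms" for w
  proof -
    obtain x where x: "x \<in> ?Ms" "w = f x" using \<open>w \<in> f ` ?Ms\<close> by blast
    then obtain i where i: "i < n" "border_point M le c i x" by (auto simp: separated_pts_def)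
    have "Var i \<in> S" if S: "S \<in> strict_exts n w" for S
    proof -
      have "S \<in> univ_pts n"
        using univ_pts_upclosed f_univ x S by (auto simp: strict_exts_def)
      then obtain x' where x': "x' \<in> ?Ms" "le x x'" "f x' = S"
        using f_back[OF x(1)] x S by (auto simp: strict_exts_def)
      moreover have "x' \<noteq> x" using x x' S by (auto simp: strict_exts_def)
      ultimately have "c x' i" using i by (auto simp: border_point_def separated_pts_def)
      then show ?thesis using f_colour x' i by blast
    qed
    moreover have "Var i \<notin> w" using x i f_colour by (auto simp: border_point_def)
    ultimately show ?thesis using i by (auto simp: border_var_def)
  qed
qed

theorem theorem3p16:
  fixes n :: nat and M :: "'a set" and le :: "'a \<Rightarrow> 'a \<Rightarrow> bool" and c :: "'a \<Rightarrow> nat \<Rightarrow> bool"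
    and f :: "'a \<Rightarrow> form set"
  assumes "n \<ge> 1"
    and "is_model n M le c"
    and "has_borders n M le c"
    and "p_morphism n (separated_pts n M le c) le c (univ_pts n) (\<subseteq>) univ_col f"
  defines "Ms \<equiv> separated_pts n M le c"
  defines "N \<equiv> f ` Ms"
  defines "h \<equiv> (\<lambda>U. {x\<in>Ms. f x \<in> U})"
  defines "r \<equiv> (\<lambda>V. {x\<in>M. \<forall>y\<in>M. le x y \<longrightarrow> y \<in> Ms \<longrightarrow> y \<in> V})"
  shows "imp_meet_gen n M le c = (r \<circ> h) ` upsets N (\<subseteq>)
    \<and> (\<exists>g. bij_betw g (upsets N (\<subseteq>)) (imp_meet_gen n M le c)
          \<and> (\<forall>U\<in>upsets N (\<subseteq>). \<forall>V\<in>upsets N (\<subseteq>).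
                g (U \<inter> V) = g U \<inter> g V
              \<and> g (himp N (\<subseteq>) U V) = himp M le (g U) (g V)))"
proof -
  interpret P: separated_pmorphism n M le c "univ_pts n" "(\<subseteq>)" univ_col f
    using assms(1-4) is_model_univ by unfold_locales
  have N_eq: "N = P.N" by (simp add: N_def Ms_def)
  interpret U: separated_upset n N
    unfolding N_eq by (rule separated_upset_pmorphism_image[OF assms(1,4)])
  have "r \<circ> h = P.pull"
    using P.Ms_subset by (auto simp: fun_eq_iff r_def h_def Ms_def pullback_def)
  moreover have image: "imp_meet_gen n M le c = P.pull ` upsets N (\<subseteq>)"
    unfolding U.upsets_eq_imp_meet_gen unfolding N_eq by (rule P.imp_meet_gen_eq_image_pull)
  moreover have "bij_betw P.pull (upsets N (\<subseteq>)) (imp_meet_gen n M le c)"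
    using P.inj_on_pull image unfolding N_eq by (simp add: bij_betw_def)
  moreover have "P.pull (U \<inter> V) = P.pull U \<inter> P.pull V"
    and "P.pull (himp N (\<subseteq>) U V) = himp M le (P.pull U) (P.pull V)"
    if "U \<in> upsets N (\<subseteq>)" for U V
    using P.pull_Int P.pull_himp that unfolding N_eq by blast+
  ultimately show ?thesis by auto
qed

end
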